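(* Let $X$ be the vertex set of a connected simplicial graph with bounded geometry, equipped with the shortest path metric, which is $\delta$-hyperbolic, and fix $e\in X$ and $p\geq 1$. For $x\in X$, $k\in\mathbb{N}$, $n\in\mathbb{N}\setminus\{0\}$, let $F_{x,k,n}$ be the set of all points of $X\setminus B(e;3\delta)$ lying on $g([n,2n])$ for some geodesic $g$ from some $y$ with $d(x,y)\leq k$ to $e$ (parametrised by arc length starting at $y$), and let $F(x,k,n)\in\ell^p(X)$ be the characteristic function of $F_{x,k,n}$. Then there exists a constant $C$ such that for all $x\in X$, all $n\in\mathbb{N}\setminus\{0\}$ and all $k\leq \frac{n}{4}$, \[ \|F(x,k,n)\|_p^p\leq Cn, \] and if in addition $d(x,e)\geq 2n$, then $n-3\delta\leq \|F(x,k,n)\|_p^p$.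
   Context: Bounded geometry: for every $r$ there is a uniform bound on the cardinality of balls of radius $r$. $\delta$-hyperbolicity in the Rips sense: each side of a geodesic triangle lies in the $\delta$-neighbourhood of the union of the other two. *)

theory Defs
  imports "HOL-Analysis.Analysis"
begin

text \<open>A simplicial graph on the vertex type 'a, given by a symmetric irreflexive
  adjacency relation E. Its vertex set X is the whole type.\<close>

definition simple_graph :: "('a \<Rightarrow> 'a \<Rightarrow> bool) \<Rightarrow> bool" where
  "simple_graph E \<longleftrightarrow> (\<forall>x y. E x y \<longrightarrow> E y x) \<and> (\<forall>x. \<not> E x x)"

definition is_walk :: "('a \<Rightarrow> 'a \<Rightarrow> bool) \<Rightarrow> (nat \<Rightarrow> 'a) \<Rightarrow> nat \<Rightarrow> 'a \<Rightarrow> 'a \<Rightarrow> bool" where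
  "is_walk E w n x y \<longleftrightarrow> w 0 = x \<and> w n = y \<and> (\<forall>i<n. E (w i) (w (Suc i)))"

definition graph_connected :: "('a \<Rightarrow> 'a \<Rightarrow> bool) \<Rightarrow> bool" where
  "graph_connected E \<longleftrightarrow> (\<forall>x y. \<exists>w n. is_walk E w n x y)"

definition gdist :: "('a \<Rightarrow> 'a \<Rightarrow> bool) \<Rightarrow> 'a \<Rightarrow> 'a \<Rightarrow> nat" where
  "gdist E x y = (LEAST n. \<exists>w. is_walk E w n x y)"

definition bounded_geometry :: "('a \<Rightarrow> 'a \<Rightarrow> bool) \<Rightarrow> bool" where
  "bounded_geometry E \<longleftrightarrow>
     (\<forall>r::nat. \<exists>N::nat. \<forall>x. finite {y. gdist E x y \<le> r} \<and> card {y. gdist E x y \<le> r} \<le> N)"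

definition is_geodesic :: "('a \<Rightarrow> 'a \<Rightarrow> bool) \<Rightarrow> (nat \<Rightarrow> 'a) \<Rightarrow> 'a \<Rightarrow> 'a \<Rightarrow> bool" where
  "is_geodesic E g y z \<longleftrightarrow> g 0 = y \<and> g (gdist E y z) = z \<and>
     (\<forall>i \<le> gdist E y z. \<forall>j \<le> gdist E y z. gdist E (g i) (g j) = nat \<bar>int i - int j\<bar>)"

definition rips_hyperbolic :: "('a \<Rightarrow> 'a \<Rightarrow> bool) \<Rightarrow> real \<Rightarrow> bool" where
  "rips_hyperbolic E \<delta> \<longleftrightarrow>
     (\<forall>a b c g1 g2 g3. is_geodesic E g1 a b \<and> is_geodesic E g2 b c \<and> is_geodesic E g3 c a \<longrightarrow>
        (\<forall>i \<le> gdist E a b. \<exists>z.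
            ((\<exists>j \<le> gdist E b c. z = g2 j) \<or> (\<exists>j \<le> gdist E c a. z = g3 j)) \<and>
            real (gdist E (g1 i) z) \<le> \<delta>))"

definition Fset :: "('a \<Rightarrow> 'a \<Rightarrow> bool) \<Rightarrow> real \<Rightarrow> 'a \<Rightarrow> 'a \<Rightarrow> nat \<Rightarrow> nat \<Rightarrow> 'a set" where
  "Fset E \<delta> e x k n = {z. \<not> (real (gdist E e z) \<le> 3 * \<delta>) \<and>
      (\<exists>y g i. gdist E x y \<le> k \<and> is_geodesic E g y e \<and>
               n \<le> i \<and> i \<le> 2 * n \<and> i \<le> gdist E y e \<and> z = g i)}"

definition lp_norm_pow :: "real \<Rightarrow> ('a \<Rightarrow> real) \<Rightarrow> real" where
  "lp_norm_pow p f = (\<Sum>\<^sub>\<infinity>z. \<bar>f z\<bar> powr p)"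

end

theory Submission
  imports Defs
begin

text \<open>For an indicator function the p-th power of the l^p norm is just the cardinality of
  the set. A point z of F_{x,k,n} sits at position i \<in> [n, 2n] on a geodesic from some y
  with d(x,y) \<le> k to e. In the geodesic triangle with vertices y, e, x the side from x to y is
  too short to come \<delta>-close to z, so z is \<delta>-close to a point of one fixed geodesic from e
  to x, whose distance to e is d(x,e) - i up to k + \<delta>. These points range over O(n)
  positions, and bounded geometry bounds the \<delta>-ball around each, so |F_{x,k,n}| = O(n).
  (When n \<le> k + \<delta> the side from x to y is not short, but then F_{x,k,n} lies in a ball of
  radius 4\<delta> around x.)
  Conversely, if d(x,e) \<ge> 2n, the points of a geodesic from x to e at positions
  n, ..., 2n lie in F_{x,k,n} unless they are within 3\<delta> of e, which excludes at most
  3\<delta> + 1 of them.\<close>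

abbreviation gball :: "('a \<Rightarrow> 'a \<Rightarrow> bool) \<Rightarrow> 'a \<Rightarrow> nat \<Rightarrow> 'a set" where
  "gball E x r \<equiv> {y. gdist E x y \<le> r}"

lemma le_nat_floor: "real m \<le> r \<Longrightarrow> m \<le> nat \<lfloor>r\<rfloor>"
  by (simp add: le_nat_iff le_floor_iff)

lemma gdist_le_walk_length: "is_walk E w n x y \<Longrightarrow> gdist E x y \<le> n"
  unfolding gdist_def by (rule Least_le) blast

lemma gdist_self [simp]: "gdist E x x = 0"
  using gdist_le_walk_length[of E "\<lambda>_. x" 0 x x] by (simp add: is_walk_def)

lemma geodesic_gdist_from_start:
  assumes "is_geodesic E g y z" "i \<le> gdist E y z"
  shows "gdist E y (g i) = i"
  using assms unfolding is_geodesic_def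
  by (metis diff_zero le0 nat_int of_nat_0 abs_minus_commute abs_of_nat nat_abs_int_diff)

lemma geodesic_gdist_to_end:
  assumes "is_geodesic E g y z" "i \<le> gdist E y z"
  shows "gdist E (g i) z = gdist E y z - i"
  using assms unfolding is_geodesic_def by (metis order_refl nat_abs_int_diff)

lemma geodesic_inj_on:
  assumes "is_geodesic E g y z"
  shows "inj_on g {..gdist E y z}"
proof
  fix i j assume "i \<in> {..gdist E y z}" "j \<in> {..gdist E y z}" "g i = g j"
  moreover have "gdist E (g i) (g j) = nat \<bar>int i - int j\<bar>"
    using assms \<open>i \<in> {..gdist E y z}\<close> \<open>j \<in> {..gdist E y z}\<close> unfolding is_geodesic_def by blast
  ultimately show "i = j" by simp
qed

lemma rips_hyperbolic_nonneg:
  assumes "rips_hyperbolic E \<delta>"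
  shows "\<delta> \<ge> 0"
proof -
  fix x :: 'a
  have "is_geodesic E (\<lambda>_. x) x x" by (simp add: is_geodesic_def)
  with assms obtain z where "real (gdist E x z) \<le> \<delta>" unfolding rips_hyperbolic_def by blast
  then show ?thesis by linarith
qed

locale connected_simple_graph =
  fixes E :: "'a \<Rightarrow> 'a \<Rightarrow> bool"
  assumes simple: "simple_graph E" and connected: "graph_connected E"
begin

lemma walk_of_length_gdist: "\<exists>w. is_walk E w (gdist E x y) x y"
proof -
  from connected have "\<exists>n w. is_walk E w n x y" unfolding graph_connected_def by blast
  then show ?thesis unfolding gdist_def by (rule LeastI_ex)
qed

lemma gdist_commute: "gdist E x y = gdist E y x"
proof -
  have reverse_le: "gdist E y x \<le> gdist E x y" for x y
  proof -
    obtain w where w: "is_walk E w (gdist E x y) x y" using walk_of_length_gdist by blast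
    define n where "n = gdist E x y"
    have "is_walk E (\<lambda>i. w (n - i)) n y x"
      unfolding is_walk_def
    proof (intro conjI allI impI)
      fix i assume i: "i < n"
      then have "E (w (n - Suc i)) (w (Suc (n - Suc i)))" using w unfolding is_walk_def n_def by auto
      moreover have "Suc (n - Suc i) = n - i" using i by simp
      ultimately show "E (w (n - i)) (w (n - Suc i))" using simple unfolding simple_graph_def by metis
    qed (use w in \<open>auto simp: is_walk_def n_def\<close>)
    then show ?thesis unfolding n_def by (rule gdist_le_walk_length)
  qed
  show ?thesis using reverse_le[of x y] reverse_le[of y x] by (rule antisym)
qed

lemma gdist_triangle: "gdist E x z \<le> gdist E x y + gdist E y z"
proof -
  obtain u where u: "is_walk E u (gdist E x y) x y" using walk_of_length_gdist by blast
  obtain v where v: "is_walk E v (gdist E y z) y z" using walk_of_length_gdist by blast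
  define m where "m = gdist E x y"
  define w where "w i = (if i \<le> m then u i else v (i - m))" for i
  have w_tail: "w i = v (i - m)" if "m \<le> i" for i
    using that u v by (cases "i = m") (auto simp: w_def is_walk_def m_def)
  have "is_walk E w (m + gdist E y z) x z"
    unfolding is_walk_def
  proof (intro conjI allI impI)
    fix i assume i: "i < m + gdist E y z"
    show "E (w i) (w (Suc i))"
    proof (cases "i < m")
      case True
      then show ?thesis using u by (simp add: w_def is_walk_def m_def)
    next
      case False
      then have "w i = v (i - m)" "w (Suc i) = v (Suc (i - m))"
        using w_tail[of i] w_tail[of "Suc i"] by (auto simp: Suc_diff_le)
      then show ?thesis using v i False by (simp add: is_walk_def)
    qed
  qed (use u v w_tail[of "m + gdist E y z"] in \<open>auto simp: w_def is_walk_def m_def\<close>)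
  then show ?thesis unfolding m_def by (rule gdist_le_walk_length)
qed

text \<open>A walk of minimal length is a geodesic: a shortcut between two of its points would
  shorten the whole walk.\<close>

lemma geodesic_exists: "\<exists>g. is_geodesic E g x y"
proof -
  obtain w where w: "is_walk E w (gdist E x y) x y" using walk_of_length_gdist by blast
  define D where "D = gdist E x y"
  have sub: "gdist E (w i) (w j) \<le> j - i" if "i \<le> j" "j \<le> D" for i j
    using that w by (intro gdist_le_walk_length[of E "\<lambda>t. w (i + t)"]) (auto simp: is_walk_def D_def)
  have exact: "gdist E (w i) (w j) = j - i" if "i \<le> j" "j \<le> D" for i j
  proof -
    have "D \<le> gdist E x (w i) + gdist E (w i) y"
      unfolding D_def by (rule gdist_triangle)
    moreover have "gdist E (w i) y \<le> gdist E (w i) (w j) + gdist E (w j) y"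
      by (rule gdist_triangle)
    moreover have "gdist E x (w i) \<le> i" "gdist E (w j) y \<le> D - j"
      using sub[of 0 i] sub[of j D] that w by (auto simp: is_walk_def D_def)
    ultimately show ?thesis using sub[OF that] that by linarith
  qed
  have "is_geodesic E w x y"
    unfolding is_geodesic_def nat_abs_int_diff
  proof (intro conjI allI impI)
    fix i j assume "i \<le> gdist E x y" "j \<le> gdist E x y"
    then show "gdist E (w i) (w j) = (if i \<le> j then j - i else i - j)"
      using exact[of i j] exact[of j i] gdist_commute[of "w i" "w j"] by (simp add: D_def)
  qed (use w in \<open>auto simp: is_walk_def\<close>)
  then show ?thesis by blast
qed

lemma Fset_subset_gball: "Fset E \<delta> e x k n \<subseteq> gball E x (k + 2 * n)"
proof
  fix z assume "z \<in> Fset E \<delta> e x k n"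
  then obtain y g i where "gdist E x y \<le> k" "is_geodesic E g y e" "i \<le> 2 * n"
    "i \<le> gdist E y e" "z = g i"
    unfolding Fset_def by blast
  moreover have "gdist E x z \<le> gdist E x y + gdist E y z" by (rule gdist_triangle)
  ultimately show "z \<in> gball E x (k + 2 * n)" using geodesic_gdist_from_start by fastforce
qed

lemma finite_Fset:
  assumes "bounded_geometry E"
  shows "finite (Fset E \<delta> e x k n)"
proof -
  from assms have "finite (gball E x (k + 2 * n))" unfolding bounded_geometry_def by blast
  then show ?thesis by (rule finite_subset[OF Fset_subset_gball])
qed

end

locale hyperbolic_graph = connected_simple_graph +
  fixes \<delta> :: real
  assumes hyperbolic: "rips_hyperbolic E \<delta>"
begin

lemma card_Fset_lower:
  assumes finite: "finite (Fset E \<delta> e x k n)" and far: "2 * n \<le> gdist E x e"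
  shows "real n - 3 * \<delta> \<le> card (Fset E \<delta> e x k n)"
proof -
  obtain g where g: "is_geodesic E g x e" using geodesic_exists by blast
  define t where "t = nat \<lfloor>3 * \<delta>\<rfloor>"
  define I where "I = {n..<2 * n - t}"
  have I_le: "i \<le> gdist E x e" if "i \<in> I" for i
    using that far by (auto simp: I_def)
  have "g ` I \<subseteq> Fset E \<delta> e x k n"
  proof
    fix z assume "z \<in> g ` I"
    then obtain i where i: "i \<in> I" "z = g i" by blast
    have "gdist E e z = gdist E x e - i"
      using geodesic_gdist_to_end[OF g I_le[OF i(1)]] i(2) gdist_commute by simp
    moreover have "t < gdist E x e - i" using i(1) far by (auto simp: I_def)
    ultimately have "\<not> real (gdist E e z) \<le> 3 * \<delta>"
      unfolding t_def by linarith
    moreover have "n \<le> i" "i \<le> 2 * n" "gdist E x x \<le> k" using i(1) by (auto simp: I_def)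
    ultimately show "z \<in> Fset E \<delta> e x k n"
      unfolding Fset_def using g i(2) I_le[OF i(1)] by blast
  qed
  moreover have "inj_on g I"
    using geodesic_inj_on[OF g] by (rule inj_on_subset) (use I_le in blast)
  ultimately have "card I \<le> card (Fset E \<delta> e x k n)"
    using card_inj_on_le finite by blast
  moreover have "real t \<le> 3 * \<delta>"
    using rips_hyperbolic_nonneg[OF hyperbolic] by (simp add: t_def)
  ultimately show ?thesis by (simp add: I_def)
qed

text \<open>Hyperbolicity of the triangle (y, e, x); the assumption on k excludes the side from x
  to y.\<close>

lemma Fset_near_geodesic:
  assumes h: "is_geodesic E h e x" and z: "z \<in> Fset E \<delta> e x k n"
    and short: "k + nat \<lfloor>\<delta>\<rfloor> < n"
  shows "\<exists>j. gdist E e x \<le> j + 2 * n + k + nat \<lfloor>\<delta>\<rfloor> \<and> j + n \<le> gdist E e x + k + nat \<lfloor>\<delta>\<rfloor>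
           \<and> z \<in> gball E (h j) (nat \<lfloor>\<delta>\<rfloor>)"
proof -
  define c where "c = nat \<lfloor>\<delta>\<rfloor>"
  from z obtain y g i where y: "gdist E x y \<le> k" and g: "is_geodesic E g y e"
    and i: "n \<le> i" "i \<le> 2 * n" "i \<le> gdist E y e" and zi: "z = g i"
    unfolding Fset_def by blast
  obtain q where q: "is_geodesic E q x y" using geodesic_exists by blast
  obtain w where w: "(\<exists>j \<le> gdist E e x. w = h j) \<or> (\<exists>j \<le> gdist E x y. w = q j)"
      and wd: "real (gdist E (g i) w) \<le> \<delta>"
    using hyperbolic[unfolded rips_hyperbolic_def, rule_format, OF conjI[OF g conjI[OF h q]] i(3)]
    by blast
  have zw: "gdist E z w \<le> c"
    unfolding zi c_def using wd by (rule le_nat_floor)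
  have yz: "gdist E y z = i" using geodesic_gdist_from_start[OF g i(3)] zi by simp
  have ze: "gdist E z e + i = gdist E y e" using geodesic_gdist_to_end[OF g i(3)] zi i(3) by simp
  have "\<not> (\<exists>j \<le> gdist E x y. w = q j)"
  proof
    assume "\<exists>j \<le> gdist E x y. w = q j"
    then obtain j where "j \<le> gdist E x y" "w = q j" by blast
    then have "gdist E w y \<le> k" using geodesic_gdist_to_end[OF q] y by simp
    moreover have "gdist E y z \<le> gdist E y w + gdist E w z" by (rule gdist_triangle)
    ultimately have "i \<le> k + c" using yz zw gdist_commute[of w z] gdist_commute[of w y] by linarith
    then show False using i short by (simp add: c_def)
  qed
  with w obtain j where j: "j \<le> gdist E e x" "w = h j" by blast
  have ew: "gdist E e w = j" using geodesic_gdist_from_start[OF h j(1)] j(2) by simp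
  have "j \<le> gdist E e z + gdist E z w"
    using gdist_triangle[of e w z] ew by simp
  then have upper: "j + i \<le> gdist E y e + c"
    using ze zw gdist_commute[of e z] by linarith
  have "gdist E z e \<le> gdist E z w + j"
    using gdist_triangle[of z e w] ew gdist_commute[of w e] by simp
  then have lower: "gdist E y e \<le> j + i + c"
    using ze zw by linarith
  have "gdist E y e \<le> k + gdist E e x" "gdist E e x \<le> k + gdist E y e"
    using gdist_triangle[of y e x] gdist_triangle[of e x y] y gdist_commute[of x y] gdist_commute[of x e]
      gdist_commute[of e y] by linarith+
  then have "gdist E e x \<le> j + 2 * n + k + c \<and> j + n \<le> gdist E e x + k + c"
    using upper lower i by linarith
  moreover have "z \<in> gball E (h j) c" using zw j(2) gdist_commute by simp
  ultimately show ?thesis unfolding c_def by blast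
qed

lemma card_Fset_upper:
  assumes "bounded_geometry E"
  shows "\<exists>C. \<forall>x k n. 4 * k \<le> n \<longrightarrow> 1 \<le> n \<longrightarrow> card (Fset E \<delta> e x k n) \<le> C * n"
proof -
  obtain N where finite_gball: "\<And>r x. finite (gball E x r)"
    and card_gball: "\<And>r x. card (gball E x r) \<le> N r"
    using assms unfolding bounded_geometry_def by metis
  define c where "c = nat \<lfloor>\<delta>\<rfloor>"
  have "card (Fset E \<delta> e x k n) \<le> (N (4 * c) + (2 * c + 3) * N c) * n"
    if kn: "4 * k \<le> n" and n: "1 \<le> n" for x k n
  proof (cases "k + c < n")
    case True
    obtain h where h: "is_geodesic E h e x" using geodesic_exists by blast
    define J where "J = {gdist E e x - (2 * n + k + c) .. gdist E e x + k + c - n}"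
    have Fset_cover: "Fset E \<delta> e x k n \<subseteq> (\<Union>j\<in>J. gball E (h j) c)"
    proof
      fix z assume "z \<in> Fset E \<delta> e x k n"
      from Fset_near_geodesic[OF h this] True obtain j
        where "gdist E e x \<le> j + 2 * n + k + c" "j + n \<le> gdist E e x + k + c"
          "z \<in> gball E (h j) c"
        unfolding c_def by blast
      then show "z \<in> (\<Union>j\<in>J. gball E (h j) c)" unfolding J_def by (intro UN_I[of j]) auto
    qed
    have "card J \<le> n + 2 * k + 2 * c + 1" by (simp add: J_def)
    moreover have "c \<le> c * n" and "(2 * c + 3) * n = 2 * (c * n) + 3 * n"
      using n by (simp_all add: algebra_simps)
    ultimately have card_J: "card J \<le> (2 * c + 3) * n" using kn n by linarith
    have "card (Fset E \<delta> e x k n) \<le> card (\<Union>j\<in>J. gball E (h j) c)"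
      using Fset_cover by (rule card_mono[rotated]) (simp add: J_def finite_gball)
    also have "\<dots> \<le> (\<Sum>j\<in>J. card (gball E (h j) c))"
      by (rule card_UN_le) (simp add: J_def)
    also have "\<dots> \<le> card J * N c"
      using sum_bounded_above[of J "\<lambda>j. card (gball E (h j) c)"] card_gball by simp
    also have "\<dots> \<le> (2 * c + 3) * n * N c"
      using card_J by (rule mult_le_mono1)
    finally show ?thesis by (simp add: algebra_simps)
  next
    case False
    then have "Fset E \<delta> e x k n \<subseteq> gball E x (4 * c)"
      using Fset_subset_gball kn by fastforce
    then have "card (Fset E \<delta> e x k n) \<le> card (gball E x (4 * c))"
      by (rule card_mono[OF finite_gball])
    also have "\<dots> \<le> N (4 * c)" by (rule card_gball)
    also have "\<dots> \<le> N (4 * c) * n" using n by simp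
    finally show ?thesis by (simp add: algebra_simps)
  qed
  then show ?thesis by blast
qed

end

text \<open>The exponent is irrelevant for an indicator function, as 1 powr p = 1 and
  0 powr p = 0 for every real p.\<close>

lemma lp_norm_pow_indicator:
  assumes "finite A"
  shows "lp_norm_pow p (indicator A :: 'a \<Rightarrow> real) = card A"
proof -
  have "lp_norm_pow p (indicator A :: 'a \<Rightarrow> real) = (\<Sum>\<^sub>\<infinity>z\<in>A. 1)"
    unfolding lp_norm_pow_def by (rule infsum_cong_neutral) (auto simp: indicator_def)
  also have "\<dots> = card A" using assms by simp
  finally show ?thesis .
qed

theorem lemma3p3:
  fixes E :: "'a \<Rightarrow> 'a \<Rightarrow> bool" and \<delta> p :: real and e :: 'a
  assumes "simple_graph E" and "graph_connected E" and "bounded_geometry E"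
    and "rips_hyperbolic E \<delta>" and "p \<ge> 1"
  shows "\<exists>C::real. \<forall>x n k. n \<ge> 1 \<and> real k \<le> real n / 4 \<longrightarrow>
            lp_norm_pow p (indicator (Fset E \<delta> e x k n)) \<le> C * real n \<and>
            (gdist E x e \<ge> 2 * n \<longrightarrow>
               real n - 3 * \<delta> \<le> lp_norm_pow p (indicator (Fset E \<delta> e x k n)))"
proof -
  interpret hyperbolic_graph E \<delta>
    using assms(1,2,4) by unfold_locales
  obtain C where C: "\<And>x k n. 4 * k \<le> n \<Longrightarrow> 1 \<le> n \<Longrightarrow> card (Fset E \<delta> e x k n) \<le> C * n"
    using card_Fset_upper[OF assms(3)] by blast
  show ?thesis
  proof (intro exI[of _ "real C"] allI impI)
    fix x n k assume "n \<ge> 1 \<and> real k \<le> real n / 4"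
    then have "4 * k \<le> n" "1 \<le> n" by linarith+
    moreover have "finite (Fset E \<delta> e x k n)" using assms(3) by (rule finite_Fset)
    ultimately show "lp_norm_pow p (indicator (Fset E \<delta> e x k n)) \<le> real C * real n \<and>
        (gdist E x e \<ge> 2 * n \<longrightarrow> real n - 3 * \<delta> \<le> lp_norm_pow p (indicator (Fset E \<delta> e x k n)))"
      using C card_Fset_lower lp_norm_pow_indicator by (metis of_nat_le_iff of_nat_mult)
  qed
qed

end
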